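(* Let $G$ be the graph on vertex set $\{a,b,p,q,x,z\}$ with edges $\{a,b\},\{a,x\},\{b,x\},\{a,p\},\{b,q\},\{p,z\},\{x,z\},\{q,z\}$, and let $I(G)\subseteq K[a,b,p,q,x,z]$ ($K$ a field) be its edge ideal. Then $I(G)^s$ has linear quotients for all $s\ge 2$.
   Context: The edge ideal is generated by the monomials $uv$ for the edges $\{u,v\}$ of $G$. A monomial ideal generated in a single degree has linear quotients if its minimal monomial generators can be ordered $u_1>\cdots>u_r$ so that each colon ideal $(u_1,\ldots,u_i):u_{i+1}$, $1\le i<r$, is generated by a subset of the variables. *)

theory Defs
  imports "HOL-Library.Poly_Mapping"
begin

datatype var = a | b | p | q | x | z

text \<open>Polynomials over K in the variables var: finitely supported maps from
  exponent vectors (monomials) to coefficients, with convolution product.\<close>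
type_synonym 'k mpoly = "(var \<Rightarrow>\<^sub>0 nat) \<Rightarrow>\<^sub>0 'k"

definition monomial_of :: "(var \<Rightarrow>\<^sub>0 nat) \<Rightarrow> 'k::field mpoly" where
  "monomial_of m = Poly_Mapping.single m 1"

definition Var :: "var \<Rightarrow> 'k::field mpoly" where
  "Var v = monomial_of (Poly_Mapping.single v 1)"

definition ideal_gen :: "'k::field mpoly set \<Rightarrow> 'k mpoly set" where
  "ideal_gen S = {f. \<exists>F r. finite F \<and> F \<subseteq> S \<and> f = (\<Sum>g\<in>F. r g * g)}"

definition ideal_mult :: "'k::field mpoly set \<Rightarrow> 'k mpoly set \<Rightarrow> 'k mpoly set" where
  "ideal_mult I J = ideal_gen {f * g | f g. f \<in> I \<and> g \<in> J}"

fun ideal_power :: "'k::field mpoly set \<Rightarrow> nat \<Rightarrow> 'k mpoly set" where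
  "ideal_power I 0 = UNIV"
| "ideal_power I (Suc n) = ideal_mult I (ideal_power I n)"

definition colon :: "'k::field mpoly set \<Rightarrow> 'k mpoly \<Rightarrow> 'k mpoly set" where
  "colon J u = {f. f * u \<in> J}"

definition min_mono_gens :: "'k::field mpoly set \<Rightarrow> 'k mpoly set" where
  "min_mono_gens I = {monomial_of m | m. monomial_of m \<in> I \<and>
      (\<forall>m' c. monomial_of m' \<in> I \<and> m = m' + c \<longrightarrow> c = 0)}"

definition linear_quotients :: "'k::field mpoly set \<Rightarrow> bool" where
  "linear_quotients I \<longleftrightarrow> (\<exists>us. distinct us \<and> set us = min_mono_gens I \<and>
     (\<forall>i. 1 \<le> i \<and> i < length us \<longrightarrow>
        (\<exists>S. colon (ideal_gen (set (take i us))) (us ! i) = ideal_gen (Var ` S))))"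

definition G_edges :: "var set set" where
  "G_edges = {{a,b},{a,x},{b,x},{a,p},{b,q},{p,z},{x,z},{q,z}}"

definition edge_ideal :: "var set set \<Rightarrow> 'k::field mpoly set" where
  "edge_ideal E = ideal_gen {Var u * Var v | u v. {u, v} \<in> E \<and> u \<noteq> v}"

end

(*
  The minimal generators of I(G)^s are the monomials of degree 2s whose exponents sum to at
  most s over each maximal independent set {p,q,x}, {a,z}, {b,z}, {a,q}, {b,p} of G: every edge
  meets such a set at most once, and conversely from any such monomial of degree 2s + 2 one can
  strip an edge keeping the bounds.  List these generators by decreasing powers of x, a, b, then
  increasing powers of z, and break the remaining ties (where p + q is fixed) by p.  For a monomial
  ideal, linear quotients amounts to an exchange property: whenever d precedes u, some x_v with
  deg_v d > deg_v u gives an earlier generator u x_v / x_w.  A case analysis on the first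
  coordinate in which d beats u produces x_v and x_w; it needs s >= 2.
*)
theory Submission
  imports Defs "HOL-Library.Set_Algebras" "HOL-Library.Product_Lexorder"
begin

section \<open>Monomial ideals\<close>

type_synonym mono = "var \<Rightarrow>\<^sub>0 nat"

lemma ideal_gen_zero: "0 \<in> ideal_gen S"
  unfolding ideal_gen_def by (intro CollectI exI[of _ "{}"]) simp

lemma ideal_gen_generator: "g \<in> S \<Longrightarrow> g \<in> ideal_gen S"
  unfolding ideal_gen_def by (intro CollectI exI[of _ "{g}"] exI[of _ "\<lambda>_. 1"]) simp

lemma ideal_gen_add:
  assumes "f \<in> ideal_gen S" "h \<in> ideal_gen S"
  shows "f + h \<in> ideal_gen S"
proof -
  obtain F r where F: "finite F" "F \<subseteq> S" "f = (\<Sum>g\<in>F. r g * g)"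
    using assms(1) unfolding ideal_gen_def by blast
  obtain H t where H: "finite H" "H \<subseteq> S" "h = (\<Sum>g\<in>H. t g * g)"
    using assms(2) unfolding ideal_gen_def by blast
  define r' where "r' g = (if g \<in> F then r g else 0)" for g
  define t' where "t' g = (if g \<in> H then t g else 0)" for g
  have "f = (\<Sum>g\<in>F \<union> H. r' g * g)" "h = (\<Sum>g\<in>F \<union> H. t' g * g)"
    unfolding F(3) H(3) r'_def t'_def
    by (auto intro: sum.mono_neutral_cong_left simp: F(1) H(1))
  then have "f + h = (\<Sum>g\<in>F \<union> H. (r' g + t' g) * g)"
    by (simp add: sum.distrib distrib_right)
  then show ?thesis
    unfolding ideal_gen_def using F H by (intro CollectI exI[of _ "F \<union> H"] exI) auto
qed

lemma ideal_gen_mult_left: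
  assumes "f \<in> ideal_gen S"
  shows "c * f \<in> ideal_gen S"
proof -
  obtain F r where F: "finite F" "F \<subseteq> S" "f = (\<Sum>g\<in>F. r g * g)"
    using assms unfolding ideal_gen_def by blast
  then have "c * f = (\<Sum>g\<in>F. (c * r g) * g)"
    by (simp add: sum_distrib_left mult.assoc)
  then show ?thesis
    unfolding ideal_gen_def using F(1,2) by (intro CollectI exI[of _ F] exI) auto
qed

lemma ideal_gen_sum:
  "finite A \<Longrightarrow> (\<And>i. i \<in> A \<Longrightarrow> f i \<in> ideal_gen S) \<Longrightarrow> sum f A \<in> ideal_gen S"
  by (induction A rule: finite_induct) (auto intro: ideal_gen_zero ideal_gen_add)

lemma ideal_gen_subset:
  assumes "S \<subseteq> ideal_gen T"
  shows "ideal_gen S \<subseteq> ideal_gen T"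
proof
  fix f assume "f \<in> ideal_gen S"
  then obtain F r where F: "finite F" "F \<subseteq> S" "f = (\<Sum>g\<in>F. r g * g)"
    unfolding ideal_gen_def by blast
  show "f \<in> ideal_gen T"
    unfolding F(3) using F(1,2) assms by (intro ideal_gen_sum ideal_gen_mult_left) auto
qed

definition mono_dvd :: "mono \<Rightarrow> mono \<Rightarrow> bool" where
  "mono_dvd d m \<longleftrightarrow> (\<forall>v. Poly_Mapping.lookup d v \<le> Poly_Mapping.lookup m v)"

lemma mono_dvd_add: "mono_dvd d (d + c)"
  unfolding mono_dvd_def by (simp add: lookup_add)

lemma mono_dvd_trans: "mono_dvd d m \<Longrightarrow> mono_dvd m k \<Longrightarrow> mono_dvd d k"
  unfolding mono_dvd_def using order_trans by blast

lemma mono_dvd_add_diff: "mono_dvd d m \<Longrightarrow> d + (m - d) = m"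
  unfolding mono_dvd_def by (intro poly_mapping_eqI) (simp add: lookup_add lookup_minus)

lemma monomial_of_mult: "monomial_of m * monomial_of n = (monomial_of (m + n) :: 'k::field mpoly)"
  unfolding monomial_of_def by (simp add: mult_single)

lemma keys_monomial_of: "Poly_Mapping.keys (monomial_of m :: 'k::field mpoly) = {m}"
  unfolding monomial_of_def by simp

lemma inj_monomial_of: "inj (monomial_of :: mono \<Rightarrow> 'k::field mpoly)"
  by (rule injI) (metis keys_monomial_of singleton_inject)

lemma poly_mapping_sum_single:
  "f = (\<Sum>m\<in>Poly_Mapping.keys f. Poly_Mapping.single m (Poly_Mapping.lookup f m))"
  by (rule poly_mapping_eqI) (simp add: lookup_sum lookup_single when_def sum.delta in_keys_iff)

lemma keys_mult_monomial_of:
  fixes f :: "'k::field mpoly"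
  shows "Poly_Mapping.keys (f * monomial_of u) = (\<lambda>k. k + u) ` Poly_Mapping.keys f"
proof -
  have "f * monomial_of u =
      (\<Sum>m\<in>Poly_Mapping.keys f. Poly_Mapping.single (m + u) (Poly_Mapping.lookup f m))"
    by (subst poly_mapping_sum_single[of f]) (simp add: sum_distrib_right monomial_of_def mult_single)
  then have "Poly_Mapping.lookup (f * monomial_of u) (k + u) = Poly_Mapping.lookup f k" for k
    by (simp add: lookup_sum lookup_single when_def sum.delta in_keys_iff)
  moreover have "Poly_Mapping.keys (f * monomial_of u) \<subseteq> (\<lambda>k. k + u) ` Poly_Mapping.keys f"
    using keys_mult[of f "monomial_of u"] by (auto simp: keys_monomial_of)
  ultimately show ?thesis
    by (auto simp: in_keys_iff)
qed

lemma mem_monomial_ideal_iff: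
  fixes f :: "'k::field mpoly"
  shows "f \<in> ideal_gen (monomial_of ` D) \<longleftrightarrow> (\<forall>m\<in>Poly_Mapping.keys f. \<exists>d\<in>D. mono_dvd d m)"
proof
  assume "f \<in> ideal_gen (monomial_of ` D)"
  then obtain F r where F: "F \<subseteq> monomial_of ` D" "f = (\<Sum>g\<in>F. r g * g)"
    unfolding ideal_gen_def by blast
  show "\<forall>m\<in>Poly_Mapping.keys f. \<exists>d\<in>D. mono_dvd d m"
  proof
    fix m assume "m \<in> Poly_Mapping.keys f"
    moreover have "Poly_Mapping.keys f \<subseteq> (\<Union>g\<in>F. Poly_Mapping.keys (r g * g))"
      unfolding F(2) by (rule keys_sum)
    ultimately obtain g where g: "g \<in> F" "m \<in> Poly_Mapping.keys (r g * g)"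
      by blast
    obtain d where d: "d \<in> D" "g = monomial_of d"
      using g(1) F(1) by blast
    have "m \<in> {k + l | k l. k \<in> Poly_Mapping.keys (r g) \<and> l \<in> Poly_Mapping.keys g}"
      using keys_mult[of "r g" g] g(2) by (rule subsetD)
    then obtain k where "m = k + d"
      by (auto simp: d(2) keys_monomial_of)
    then show "\<exists>d\<in>D. mono_dvd d m"
      using d(1) mono_dvd_add[of d k] by (auto simp: add.commute)
  qed
next
  assume divisible: "\<forall>m\<in>Poly_Mapping.keys f. \<exists>d\<in>D. mono_dvd d m"
  have "Poly_Mapping.single m c \<in> ideal_gen (monomial_of ` D)"
    if m: "m \<in> Poly_Mapping.keys f" for m c
  proof -
    obtain d where d: "d \<in> D" "mono_dvd d m"
      using divisible m by blast
    have "Poly_Mapping.single m c = Poly_Mapping.single (m - d) c * monomial_of d"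
      using mono_dvd_add_diff[OF d(2)] by (simp add: monomial_of_def mult_single add.commute)
    also have "\<dots> \<in> ideal_gen (monomial_of ` D)"
      using d(1) by (intro ideal_gen_mult_left ideal_gen_generator) simp
    finally show ?thesis .
  qed
  then have "(\<Sum>m\<in>Poly_Mapping.keys f. Poly_Mapping.single m (Poly_Mapping.lookup f m))
      \<in> ideal_gen (monomial_of ` D)"
    by (intro ideal_gen_sum) auto
  then show "f \<in> ideal_gen (monomial_of ` D)"
    by (subst poly_mapping_sum_single[of f])
qed

lemma monomial_of_mem_monomial_ideal_iff:
  "(monomial_of m :: 'k::field mpoly) \<in> ideal_gen (monomial_of ` D) \<longleftrightarrow> (\<exists>d\<in>D. mono_dvd d m)"
  by (simp add: mem_monomial_ideal_iff keys_monomial_of)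

lemma monomial_ideal_zero: "ideal_gen {monomial_of 0} = (UNIV :: 'k::field mpoly set)"
proof -
  have "f \<in> ideal_gen (monomial_of ` {0})" for f :: "'k mpoly"
    unfolding mem_monomial_ideal_iff by (simp add: mono_dvd_def)
  then show ?thesis
    by auto
qed

lemma ideal_mult_monomial_ideal:
  "ideal_mult (ideal_gen (monomial_of ` D)) (ideal_gen (monomial_of ` E)) =
   (ideal_gen (monomial_of ` (D + E)) :: 'k::field mpoly set)"
  (is "ideal_mult ?I ?J = ?K")
proof
  show "ideal_mult ?I ?J \<subseteq> ?K"
    unfolding ideal_mult_def
  proof (intro ideal_gen_subset subsetI, elim CollectE exE conjE)
    fix h f g :: "'k mpoly"
    assume fg: "h = f * g" "f \<in> ?I" "g \<in> ?J"
    show "h \<in> ?K"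
      unfolding mem_monomial_ideal_iff
    proof
      fix m assume "m \<in> Poly_Mapping.keys h"
      then obtain k l where kl: "m = k + l" "k \<in> Poly_Mapping.keys f" "l \<in> Poly_Mapping.keys g"
        using keys_mult[of f g] fg(1) by blast
      obtain d e where "d \<in> D" "mono_dvd d k" "e \<in> E" "mono_dvd e l"
        using kl(2,3) fg(2,3) unfolding mem_monomial_ideal_iff by blast
      then have "d + e \<in> D + E" "mono_dvd (d + e) m"
        by (auto simp: kl(1) mono_dvd_def lookup_add add_mono)
      then show "\<exists>c\<in>D + E. mono_dvd c m"
        by blast
    qed
  qed
  show "?K \<subseteq> ideal_mult ?I ?J"
    unfolding ideal_mult_def
  proof (intro ideal_gen_subset subsetI ideal_gen_generator)
    fix h :: "'k mpoly" assume "h \<in> monomial_of ` (D + E)"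
    then obtain d e where "h = monomial_of d * monomial_of e" "d \<in> D" "e \<in> E"
      unfolding set_plus_def by (auto simp: monomial_of_mult)
    then show "h \<in> {f * g |f g. f \<in> ?I \<and> g \<in> ?J}"
      by (blast intro: ideal_gen_generator)
  qed
qed

lemma min_mono_gens_monomial_ideal:
  assumes antichain: "\<And>d e. d \<in> D \<Longrightarrow> e \<in> D \<Longrightarrow> mono_dvd d e \<Longrightarrow> d = e"
  shows "min_mono_gens (ideal_gen (monomial_of ` D) :: 'k::field mpoly set) = monomial_of ` D"
    (is "min_mono_gens ?I = _")
proof
  show "min_mono_gens ?I \<subseteq> monomial_of ` D"
  proof
    fix h assume "h \<in> min_mono_gens ?I"
    then obtain m where m: "h = monomial_of m" "monomial_of m \<in> ?I"
        and minimal: "\<And>m' c. monomial_of m' \<in> ?I \<Longrightarrow> m = m' + c \<Longrightarrow> c = 0"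
      unfolding min_mono_gens_def by blast
    obtain d where d: "d \<in> D" "mono_dvd d m"
      using m(2) unfolding monomial_of_mem_monomial_ideal_iff by blast
    have "m - d = 0"
      using minimal[of d "m - d"] d mono_dvd_add_diff[OF d(2)] by (auto intro: ideal_gen_generator)
    then show "h \<in> monomial_of ` D"
      using m(1) d mono_dvd_add_diff[OF d(2)] by simp
  qed
  show "monomial_of ` D \<subseteq> min_mono_gens ?I"
  proof
    fix h :: "'k mpoly" assume "h \<in> monomial_of ` D"
    then obtain d where d: "h = monomial_of d" "d \<in> D"
      by blast
    have "c = 0" if mem: "monomial_of m' \<in> ?I" and sum: "d = m' + c" for m' c
    proof -
      obtain d' where "d' \<in> D" "mono_dvd d' m'"
        using mem unfolding monomial_of_mem_monomial_ideal_iff by blast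
      then have "d' = d"
        using antichain d(2) mono_dvd_trans mono_dvd_add sum by metis
      with \<open>mono_dvd d' m'\<close> sum show "c = 0"
        by (intro poly_mapping_eqI) (auto simp: mono_dvd_def lookup_add le_antisym)
    qed
    then show "h \<in> min_mono_gens ?I"
      unfolding min_mono_gens_def using d by (blast intro: ideal_gen_generator)
  qed
qed

lemma colon_monomial_ideal_eq_ideal_gen_Var:
  fixes u :: mono
  assumes exchange: "\<And>d. d \<in> P \<Longrightarrow> \<exists>v. Poly_Mapping.lookup u v < Poly_Mapping.lookup d v \<and>
      (\<exists>d'\<in>P. mono_dvd d' (u + Poly_Mapping.single v 1))"
  shows "colon (ideal_gen (monomial_of ` P)) (monomial_of u :: 'k::field mpoly) =
    ideal_gen (Var ` {v. \<exists>d\<in>P. mono_dvd d (u + Poly_Mapping.single v 1)})"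
proof -
  define S where "S = {v. \<exists>d\<in>P. mono_dvd d (u + Poly_Mapping.single v 1)}"
  have Var_S: "(Var ` S :: 'k mpoly set) = monomial_of ` ((\<lambda>v. Poly_Mapping.single v 1) ` S)"
    by (simp add: image_image Var_def)
  have shifted: "(\<exists>d\<in>P. mono_dvd d (k + u)) \<longleftrightarrow> (\<exists>v\<in>S. mono_dvd (Poly_Mapping.single v 1) k)" for k
  proof
    assume "\<exists>d\<in>P. mono_dvd d (k + u)"
    then obtain d where d: "d \<in> P" "mono_dvd d (k + u)"
      by blast
    then obtain v where v: "Poly_Mapping.lookup u v < Poly_Mapping.lookup d v" "v \<in> S"
      using exchange unfolding S_def by blast
    have "Poly_Mapping.lookup d v \<le> Poly_Mapping.lookup k v + Poly_Mapping.lookup u v"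
      using d(2) by (simp add: mono_dvd_def lookup_add)
    then have "mono_dvd (Poly_Mapping.single v 1) k"
      using v(1) by (auto simp: mono_dvd_def lookup_single when_def)
    then show "\<exists>v\<in>S. mono_dvd (Poly_Mapping.single v 1) k"
      using v(2) by blast
  next
    assume "\<exists>v\<in>S. mono_dvd (Poly_Mapping.single v 1) k"
    then obtain v d where "d \<in> P" "mono_dvd d (u + Poly_Mapping.single v 1)"
        "mono_dvd (Poly_Mapping.single v 1) k"
      unfolding S_def by blast
    moreover have "mono_dvd (u + Poly_Mapping.single v 1) (k + u)"
      using \<open>mono_dvd (Poly_Mapping.single v 1) k\<close> by (auto simp: mono_dvd_def lookup_add)
    ultimately show "\<exists>d\<in>P. mono_dvd d (k + u)"
      using mono_dvd_trans by blast
  qed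
  have "f \<in> colon (ideal_gen (monomial_of ` P)) (monomial_of u) \<longleftrightarrow> f \<in> ideal_gen (Var ` S)"
    for f :: "'k mpoly"
    unfolding colon_def Var_S mem_Collect_eq mem_monomial_ideal_iff keys_mult_monomial_of
    by (simp add: shifted)
  then show ?thesis
    unfolding S_def by blast
qed

lemma set_take_sorted_key:
  fixes f :: "'a \<Rightarrow> 'b::linorder"
  assumes "sorted_wrt (<) (map f xs)" "i < length xs"
  shows "set (take i xs) = {y \<in> set xs. f y < f (xs ! i)}"
proof -
  have "distinct xs"
    using assms(1) by (metis strict_sorted_iff distinct_map)
  have sorted: "f (xs ! j) < f (xs ! k)" if "j < k" "k < length xs" for j k
    using sorted_wrt_nth_less[OF assms(1)] that by simp
  have take_iff: "xs ! j \<in> set (take i xs) \<longleftrightarrow> j < i" if "j < length xs" for j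
    using \<open>distinct xs\<close> assms(2) that by (auto simp: in_set_conv_nth nth_eq_iff_index_eq)
  have key_iff: "j < i \<longleftrightarrow> f (xs ! j) < f (xs ! i)" if "j < length xs" for j
    using sorted[of j i] sorted[of i j] assms(2) that by (cases j i rule: linorder_cases) auto
  have "y \<in> set (take i xs) \<longleftrightarrow> f y < f (xs ! i)" if y: "y \<in> set xs" for y
  proof -
    obtain j where "j < length xs" "y = xs ! j"
      using y by (auto simp: in_set_conv_nth)
    then show ?thesis
      using take_iff key_iff by simp
  qed
  then show ?thesis
    by (auto dest: in_set_takeD)
qed

lemma linear_quotients_monomial_ideal:
  fixes D :: "mono set" and key :: "mono \<Rightarrow> 'a::linorder"
  assumes "finite D" "inj_on key D"
    and antichain: "\<And>d e. d \<in> D \<Longrightarrow> e \<in> D \<Longrightarrow> mono_dvd d e \<Longrightarrow> d = e"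
    and exchange: "\<And>u d. u \<in> D \<Longrightarrow> d \<in> D \<Longrightarrow> key d < key u \<Longrightarrow>
      \<exists>v. Poly_Mapping.lookup u v < Poly_Mapping.lookup d v \<and>
        (\<exists>d'\<in>D. key d' < key u \<and> mono_dvd d' (u + Poly_Mapping.single v 1))"
  shows "linear_quotients (ideal_gen (monomial_of ` D) :: 'k::field mpoly set)"
proof -
  obtain xs where xs: "set xs = D" "distinct xs"
    using finite_distinct_list[OF \<open>finite D\<close>] by blast
  define L where "L = sort_key key xs"
  have L: "set L = D" "distinct L"
    using xs by (simp_all add: L_def)
  moreover have "sorted_wrt (<) (map key L)"
    using L assms(2) by (simp add: strict_sorted_iff distinct_map L_def)
  ultimately have L: "set L = D" "sorted_wrt (<) (map key L)" "distinct L"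
    by blast+
  define us where "us = map (monomial_of :: mono \<Rightarrow> 'k mpoly) L"
  show ?thesis
    unfolding linear_quotients_def
  proof (intro exI[of _ us] conjI allI impI)
    show "distinct us"
      using L(3) by (simp add: us_def distinct_map inj_on_subset[OF inj_monomial_of])
    show "set us = min_mono_gens (ideal_gen (monomial_of ` D))"
      using L(1) by (simp add: us_def min_mono_gens_monomial_ideal[OF antichain])
    fix i assume "1 \<le> i \<and> i < length us"
    then have i: "i < length us"
      by simp
    define P where "P = {d \<in> D. key d < key (L ! i)}"
    have prefix: "set (take i us) = monomial_of ` P" "us ! i = monomial_of (L ! i)"
      using set_take_sorted_key[OF L(2)] i L(1) by (simp_all add: us_def P_def take_map)
    have "L ! i \<in> D"
      using i L(1) by (auto simp: us_def)
    then have "\<exists>v. Poly_Mapping.lookup (L ! i) v < Poly_Mapping.lookup d v \<and>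
        (\<exists>d'\<in>P. mono_dvd d' (L ! i + Poly_Mapping.single v 1))" if "d \<in> P" for d
      using exchange that unfolding P_def by blast
    then have "colon (ideal_gen (monomial_of ` P)) (monomial_of (L ! i) :: 'k mpoly) =
        ideal_gen (Var ` {v. \<exists>d\<in>P. mono_dvd d (L ! i + Poly_Mapping.single v 1)})"
      by (rule colon_monomial_ideal_eq_ideal_gen_Var)
    then show "\<exists>S. colon (ideal_gen (set (take i us))) (us ! i) = ideal_gen (Var ` S)"
      unfolding prefix by blast
  qed
qed

section \<open>Exponent vectors of the generators of the powers\<close>

text \<open>Exponent vectors are integer valued, so that decrementing an exponent is not truncated.\<close>

definition gen_vector :: "nat \<Rightarrow> (var \<Rightarrow> int) \<Rightarrow> bool" where
  "gen_vector s e \<longleftrightarrow>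
     e a + e b + e p + e q + e x + e z = 2 * int s \<and>
     e p + e q + e x \<le> int s \<and> e a + e z \<le> int s \<and> e b + e z \<le> int s \<and>
     e a + e q \<le> int s \<and> e b + e p \<le> int s"

lemma gen_vector_0_iff:
  assumes "\<And>t. 0 \<le> e t"
  shows "gen_vector 0 e \<longleftrightarrow> e = (\<lambda>_. 0)"
proof
  assume "gen_vector 0 e"
  then show "e = (\<lambda>_. 0)"
  proof (intro ext)
    fix t
    show "e t = 0"
      using \<open>gen_vector 0 e\<close> assms[of a] assms[of b] assms[of p] assms[of q] assms[of x] assms[of z]
      by (cases t) (simp_all add: gen_vector_def)
  qed
qed (simp add: gen_vector_def)

lemma gen_vector_remove_edge:
  assumes "gen_vector (Suc n) e" "\<And>t. 0 \<le> e t"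
  obtains u v where "{u, v} \<in> G_edges" "u \<noteq> v" "1 \<le> e u" "1 \<le> e v"
    "gen_vector n (e(u := e u - 1, v := e v - 1))"
proof -
  let ?removable = "\<lambda>u v. 1 \<le> e u \<and> 1 \<le> e v \<and> gen_vector n (e(u := e u - 1, v := e v - 1))"
  have "?removable a b \<or> ?removable a x \<or> ?removable b x \<or> ?removable a p \<or>
      ?removable b q \<or> ?removable p z \<or> ?removable x z \<or> ?removable q z"
    using assms(1) unfolding gen_vector_def by simp (smt (verit) assms(2) of_nat_0_le_iff)
  then show ?thesis
    using that unfolding G_edges_def by blast
qed

lemma gen_vector_add_edge:
  assumes "{u, v} \<in> G_edges" "u \<noteq> v" "gen_vector n e"
  shows "gen_vector (Suc n) (e(u := e u + 1, v := e v + 1))"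
  using assms by (auto simp: G_edges_def gen_vector_def doubleton_eq_iff)

definition tie_break :: "(var \<Rightarrow> int) \<Rightarrow> int \<times> int" where
  "tie_break e =
     (if 1 \<le> e a then (- e p, 0) else if 1 \<le> e b then (e p, 0) else (\<bar>e p - e q\<bar>, - e p))"

definition rank :: "(var \<Rightarrow> int) \<Rightarrow> int \<times> int \<times> int \<times> int \<times> int \<times> int" where
  "rank e = (- e x, - e a, - e b, e z, tie_break e)"

lemma Pair_less_iff: "((i :: 'a::order), y) < (j, y') \<longleftrightarrow> i < j \<or> i = j \<and> y < y'"
  by (auto simp: less_prod_def le_less)

lemma rank_less_cases:
  assumes "rank f < rank e"
  obtains
    (raise_x) "e x < f x"
  | (raise_a) "f x = e x" "e a < f a"
  | (raise_b) "f x = e x" "f a = e a" "e b < f b"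
  | (lower_z) "f x = e x" "f a = e a" "f b = e b" "f z < e z"
  | (tie) "f x = e x" "f a = e a" "f b = e b" "f z = e z" "tie_break f < tie_break e"
  using assms by (auto simp: rank_def Pair_less_iff simp del: less_prod_simp)

lemma rank_inj:
  assumes "gen_vector s e" "gen_vector s f" "rank e = rank f"
  shows "e = f"
proof
  fix t
  have "e x = f x" "e a = f a" "e b = f b" "e z = f z" "tie_break e = tie_break f"
    using assms(3) by (simp_all add: rank_def)
  moreover from this have "e p = f p"
    by (auto simp: tie_break_def split: if_splits)
  ultimately show "e t = f t"
    using assms(1,2) by (cases t) (simp_all add: gen_vector_def)
qed

lemma gen_vector_exchange:
  assumes "2 \<le> s" "\<And>t. 0 \<le> e t" "\<And>t. 0 \<le> f t"
    and "gen_vector s e" "gen_vector s f" "rank f < rank e"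
  obtains v w where "v \<noteq> w" "1 \<le> e w" "e v < f v"
    "gen_vector s (e(v := e v + 1, w := e w - 1))" "rank (e(v := e v + 1, w := e w - 1)) < rank e"
proof -
  let ?good = "\<lambda>v w. v \<noteq> w \<and> 1 \<le> e w \<and> e v < f v \<and>
    gen_vector s (e(v := e v + 1, w := e w - 1)) \<and> rank (e(v := e v + 1, w := e w - 1)) < rank e"
  have s: "2 \<le> int s"
    using assms(1) by simp
  note gen_vector_def [simp] rank_def [simp] tie_break_def [simp] less_prod_def [simp]
    if_distrib [of fst, simp] if_distrib [of snd, simp] if_cong [cong] if_split [split del]
  from assms(6) have "\<exists>v w. ?good v w"
  proof (cases rule: rank_less_cases)
    case raise_x
    then have "?good x q \<or> ?good x a \<or> ?good x p"
      using assms(4,5) by simp (smt (verit) s assms(2,3))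
    then show ?thesis by blast
  next
    case raise_a
    then have "?good a z \<or> ?good a q \<or> ?good b z \<or> ?good a b \<or> ?good p q"
      using assms(4,5) by simp (smt (verit) s assms(2,3))
    then show ?thesis by blast
  next
    case raise_b
    then have "?good b z \<or> ?good b p \<or> ?good b q \<or> ?good q p \<or> ?good q z"
      using assms(4,5) by simp (smt (verit) s assms(2,3))
    then show ?thesis by blast
  next
    case lower_z
    then have "?good p z \<or> ?good q z"
      using assms(4,5) by simp (smt (verit) s assms(2,3))
    then show ?thesis by blast
  next
    case tie
    then have "?good p q \<or> ?good q p"
      using assms(4,5) by simp (smt (verit) s assms(2,3))
    then show ?thesis by blast
  qed
  then show ?thesis
    using that by blast
qed

section \<open>The minimal generators of the powers of the edge ideal\<close>

definition expo :: "mono \<Rightarrow> var \<Rightarrow> int" where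
  "expo m v = int (Poly_Mapping.lookup m v)"

lemma expo_nonneg: "0 \<le> expo m v"
  by (simp add: expo_def)

lemma expo_inject: "expo m = expo m' \<Longrightarrow> m = m'"
  by (rule poly_mapping_eqI) (simp add: expo_def fun_eq_iff)

lemma expo_zero: "expo 0 = (\<lambda>_. 0)"
  by (simp add: expo_def fun_eq_iff)

lemma expo_add_single: "expo (m + Poly_Mapping.single v k) = (expo m)(v := expo m v + int k)"
  by (simp add: expo_def fun_eq_iff lookup_add lookup_single when_def)

lemma expo_diff_single:
  "int k \<le> expo m v \<Longrightarrow> expo (m - Poly_Mapping.single v k) = (expo m)(v := expo m v - int k)"
  by (auto simp: expo_def fun_eq_iff lookup_minus lookup_single when_def of_nat_diff)

definition edge_mono :: "var \<Rightarrow> var \<Rightarrow> mono" where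
  "edge_mono u v = Poly_Mapping.single u 1 + Poly_Mapping.single v 1"

definition edge_monos :: "mono set" where
  "edge_monos = {edge_mono u v | u v. {u, v} \<in> G_edges \<and> u \<noteq> v}"

lemma edge_ideal_eq_monomial_ideal:
  "edge_ideal G_edges = (ideal_gen (monomial_of ` edge_monos) :: 'k::field mpoly set)"
proof -
  have "Var u * Var v = (monomial_of (edge_mono u v) :: 'k mpoly)" for u v
    by (simp add: Var_def edge_mono_def monomial_of_mult)
  then have "{Var u * Var v | u v. {u, v} \<in> G_edges \<and> u \<noteq> v} = (monomial_of ` edge_monos :: 'k mpoly set)"
    unfolding edge_monos_def by auto
  then show ?thesis
    unfolding edge_ideal_def by simp
qed

definition gen_exponents :: "nat \<Rightarrow> mono set" where
  "gen_exponents s = {m. gen_vector s (expo m)}"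

lemma expo_add_edge_mono:
  assumes "u \<noteq> v"
  shows "expo (edge_mono u v + m) = (expo m)(u := expo m u + 1, v := expo m v + 1)"
proof -
  have "edge_mono u v + m = m + Poly_Mapping.single u 1 + Poly_Mapping.single v 1"
    by (simp add: edge_mono_def ac_simps)
  then show ?thesis
    using assms by (simp add: expo_add_single)
qed

lemma expo_diff_edge_mono:
  assumes "u \<noteq> v" "1 \<le> expo m u" "1 \<le> expo m v"
  shows "expo (m - edge_mono u v) = (expo m)(u := expo m u - 1, v := expo m v - 1)"
proof -
  have "m - edge_mono u v = m - Poly_Mapping.single u 1 - Poly_Mapping.single v 1"
    by (simp add: edge_mono_def diff_diff_add)
  then show ?thesis
    using assms by (simp add: expo_diff_single)
qed

lemma gen_exponents_0: "gen_exponents 0 = {0}"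
proof (intro set_eqI)
  fix m
  have "m \<in> gen_exponents 0 \<longleftrightarrow> expo m = expo 0"
    by (simp add: gen_exponents_def gen_vector_0_iff expo_nonneg expo_zero)
  then show "m \<in> gen_exponents 0 \<longleftrightarrow> m \<in> {0}"
    using expo_inject by auto
qed

lemma gen_exponents_Suc: "gen_exponents (Suc n) = edge_monos + gen_exponents n"
proof (intro set_eqI iffI)
  fix m assume "m \<in> gen_exponents (Suc n)"
  then obtain u v where uv: "{u, v} \<in> G_edges" "u \<noteq> v" "1 \<le> expo m u" "1 \<le> expo m v"
      "gen_vector n ((expo m)(u := expo m u - 1, v := expo m v - 1))"
    unfolding gen_exponents_def by (auto elim: gen_vector_remove_edge[OF _ expo_nonneg])
  then have "m - edge_mono u v \<in> gen_exponents n"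
    by (simp add: gen_exponents_def expo_diff_edge_mono)
  moreover have "m = edge_mono u v + (m - edge_mono u v)"
    using uv by (intro expo_inject) (simp add: expo_add_edge_mono expo_diff_edge_mono fun_eq_iff)
  moreover have "edge_mono u v \<in> edge_monos"
    using uv(1,2) by (auto simp: edge_monos_def)
  ultimately show "m \<in> edge_monos + gen_exponents n"
    by (metis set_plus_intro)
next
  fix m assume "m \<in> edge_monos + gen_exponents n"
  then obtain u v d where "{u, v} \<in> G_edges" "u \<noteq> v" "d \<in> gen_exponents n" "m = edge_mono u v + d"
    by (auto simp: set_plus_def edge_monos_def)
  then show "m \<in> gen_exponents (Suc n)"
    by (simp add: gen_exponents_def expo_add_edge_mono gen_vector_add_edge)
qed

lemma ideal_power_edge_ideal:
  "ideal_power (edge_ideal G_edges :: 'k::field mpoly set) n =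
    ideal_gen (monomial_of ` gen_exponents n)"
proof (induction n)
  case 0
  show ?case
    by (simp add: gen_exponents_0 monomial_ideal_zero)
next
  case (Suc n)
  then show ?case
    by (simp add: edge_ideal_eq_monomial_ideal ideal_mult_monomial_ideal gen_exponents_Suc)
qed

lemma finite_edge_monos: "finite edge_monos"
proof -
  have "(UNIV :: var set) = {a, b, p, q, x, z}"
    using var.exhaust by auto
  then have "finite (UNIV :: var set)"
    by (metis finite.emptyI finite_insert)
  then have "finite (case_prod edge_mono ` (UNIV \<times> UNIV))"
    by (intro finite_imageI finite_cartesian_product)
  moreover have "edge_monos \<subseteq> case_prod edge_mono ` (UNIV \<times> UNIV)"
    by (auto simp: edge_monos_def)
  ultimately show ?thesis
    by (rule finite_subset[rotated])
qed

lemma finite_gen_exponents: "finite (gen_exponents n)"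
  by (induction n) (simp_all add: gen_exponents_0 gen_exponents_Suc finite_edge_monos finite_set_plus)

lemma gen_exponents_antichain:
  assumes "d \<in> gen_exponents s" "m \<in> gen_exponents s" "mono_dvd d m"
  shows "d = m"
proof (rule expo_inject, rule ext)
  fix t
  have le: "expo d v \<le> expo m v" for v
    using assms(3) by (simp add: mono_dvd_def expo_def)
  have "expo d a + expo d b + expo d p + expo d q + expo d x + expo d z =
      expo m a + expo m b + expo m p + expo m q + expo m x + expo m z"
    using assms(1,2) by (simp add: gen_exponents_def gen_vector_def)
  then have "expo d a = expo m a \<and> expo d b = expo m b \<and> expo d p = expo m p \<and>
      expo d q = expo m q \<and> expo d x = expo m x \<and> expo d z = expo m z"
    using le[of a] le[of b] le[of p] le[of q] le[of x] le[of z] by (intro conjI; linarith)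
  then show "expo d t = expo m t"
    by (cases t) simp_all
qed

lemma inj_on_rank_expo: "inj_on (\<lambda>m. rank (expo m)) (gen_exponents s)"
  by (rule inj_onI) (auto simp: gen_exponents_def intro: expo_inject rank_inj)

lemma gen_exponents_exchange:
  assumes "2 \<le> s" "u \<in> gen_exponents s" "d \<in> gen_exponents s" "rank (expo d) < rank (expo u)"
  shows "\<exists>v. Poly_Mapping.lookup u v < Poly_Mapping.lookup d v \<and>
    (\<exists>d'\<in>gen_exponents s. rank (expo d') < rank (expo u) \<and> mono_dvd d' (u + Poly_Mapping.single v 1))"
proof -
  have "gen_vector s (expo u)" "gen_vector s (expo d)"
    using assms(2,3) by (simp_all add: gen_exponents_def)
  then obtain v w where vw: "v \<noteq> w" "1 \<le> expo u w" "expo u v < expo d v"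
      "gen_vector s ((expo u)(v := expo u v + 1, w := expo u w - 1))"
      "rank ((expo u)(v := expo u v + 1, w := expo u w - 1)) < rank (expo u)"
    by (rule gen_vector_exchange[OF assms(1) expo_nonneg expo_nonneg _ _ assms(4)])
  define d' where "d' = u + Poly_Mapping.single v 1 - Poly_Mapping.single w 1"
  have "expo d' = (expo u)(v := expo u v + 1, w := expo u w - 1)"
    using vw(1,2) by (simp add: d'_def expo_add_single expo_diff_single)
  then have "d' \<in> gen_exponents s" "rank (expo d') < rank (expo u)"
    using vw(4,5) by (simp_all add: gen_exponents_def)
  moreover have "mono_dvd d' (u + Poly_Mapping.single v 1)"
    by (simp add: d'_def mono_dvd_def lookup_minus)
  moreover have "Poly_Mapping.lookup u v < Poly_Mapping.lookup d v"
    using vw(3) by (simp add: expo_def)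
  ultimately show ?thesis
    by blast
qed

theorem proposition5p2:
  fixes s :: nat
  assumes "s \<ge> 2"
  shows "linear_quotients (ideal_power (edge_ideal G_edges :: 'k::field mpoly set) s)"
proof -
  have "linear_quotients (ideal_gen (monomial_of ` gen_exponents s) :: 'k mpoly set)"
  proof (rule linear_quotients_monomial_ideal[where key = "\<lambda>m. rank (expo m)"])
    show "finite (gen_exponents s)"
      by (rule finite_gen_exponents)
    show "inj_on (\<lambda>m. rank (expo m)) (gen_exponents s)"
      by (rule inj_on_rank_expo)
  qed (use gen_exponents_antichain gen_exponents_exchange[OF assms] in blast)+
  then show ?thesis
    by (simp add: ideal_power_edge_ideal)
qed

end
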